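(* For every positive integer $n$ and every $k\in\{0,1,\dots,n\}$, $$\sum_{\substack{J\subseteq[n]\\ |J|=n-k}}\ \prod_{i=1}^n\,[\operatorname{st}^B_i(J)+1]_q\;=\;[2k]!!_q\cdot\operatorname{Stir}^B_q(n,k).$$
   Context: $[m]_q=1+q+\dots+q^{m-1}$ for integers $m\ge1$. The $q$-double factorial is $[m]!!_q=[m]_q[m-2]_q[m-4]_q\cdots$, the product ending at $[1]_q$ or $[2]_q$ according to the parity of $m$, with $[0]!!_q=1$; thus $[2k]!!_q=[2k]_q[2k-2]_q\cdots[2]_q$. The type $B$ $q$-Stirling numbers $\operatorname{Stir}^B_q(n,k)$ are defined by $\operatorname{Stir}^B_q(0,k)=1$ if $k=0$ and $0$ otherwise, and for $n\ge1$ by $\operatorname{Stir}^B_q(n,k)=\operatorname{Stir}^B_q(n-1,k-1)+[2k+1]_q\operatorname{Stir}^B_q(n-1,k)$ (with $\operatorname{Stir}^B_q(n-1,-1)=0$). For $J\subseteq[n]$ and $i\in[n]$, the type $B$ $J$-staircase is $\operatorname{st}^B_i(J)=2\,|\{1,\dots,i-1\}\setminus J|+[i\notin J]$, where $[P]$ is $1$ if $P$ holds and $0$ otherwise. *)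

theory Defs
  imports Main
begin

definition qint :: "'a::comm_semiring_1 \<Rightarrow> nat \<Rightarrow> 'a" where
  "qint q m = (\<Sum>i<m. q ^ i)"

fun qdfact :: "'a::comm_semiring_1 \<Rightarrow> nat \<Rightarrow> 'a" where
  "qdfact q 0 = 1"
| "qdfact q (Suc 0) = 1"
| "qdfact q (Suc (Suc m)) = qint q (Suc (Suc m)) * qdfact q m"

fun stirB :: "'a::comm_semiring_1 \<Rightarrow> nat \<Rightarrow> nat \<Rightarrow> 'a" where
  "stirB q 0 k = (if k = 0 then 1 else 0)"
| "stirB q (Suc n) k =
     (if k = 0 then 0 else stirB q n (k - 1)) + qint q (2 * k + 1) * stirB q n k"

definition stB :: "nat set \<Rightarrow> nat \<Rightarrow> nat" where
  "stB J i = 2 * card ({1..<i} - J) + (if i \<notin> J then 1 else 0)"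

end

theory Submission
  imports Defs
begin

text \<open>
  Index the sum by the number k of points of {1..n} missing from J, and split the
  subsets of {1..n+1} according to whether they contain n+1. The staircase values at
  positions i \<le> n do not see n+1, and at position n+1 the staircase equals 2k+1 if
  n+1 \<notin> J and 2k if n+1 \<in> J. Hence the sum obeys
  S(n+1,k) = [2k]_q S(n,k-1) + [2k+1]_q S(n,k), which is the recurrence of
  Stir^B_q multiplied through by [2k]!!_q = [2k]_q [2k-2]!!_q.
\<close>

lemma sum_Pow_insert:
  assumes "finite A" and "a \<notin> A"
  shows "(\<Sum>J\<in>Pow (insert a A). f J) = (\<Sum>J\<in>Pow A. f J) + (\<Sum>J\<in>Pow A. f (insert a J))"
proof -
  have "(\<Sum>J\<in>Pow (insert a A). f J) = (\<Sum>J\<in>Pow A. f J) + (\<Sum>J\<in>insert a ` Pow A. f J)"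
    unfolding Pow_insert by (rule sum.union_disjoint) (use assms in auto)
  also have "(\<Sum>J\<in>insert a ` Pow A. f J) = (\<Sum>J\<in>Pow A. f (insert a J))"
    by (subst sum.reindex) (use assms in \<open>auto intro!: inj_onI simp: o_def\<close>)
  finally show ?thesis .
qed

lemma stB_insert_greater:
  assumes "i < m"
  shows "stB (insert m J) i = stB J i"
proof -
  have "{1..<i} - insert m J = {1..<i} - J" using assms by auto
  then show ?thesis using assms unfolding stB_def by simp
qed

lemma stB_Suc_notin: "J \<subseteq> {1..n} \<Longrightarrow> stB J (Suc n) = 2 * card ({1..n} - J) + 1"
  unfolding stB_def by (auto simp: atLeastLessThanSuc_atLeastAtMost)

lemma stB_Suc_insert: "J \<subseteq> {1..n} \<Longrightarrow> stB (insert (Suc n) J) (Suc n) = 2 * card ({1..n} - J)"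
proof -
  have "{1..<Suc n} - insert (Suc n) J = {1..n} - J" by auto
  then show ?thesis unfolding stB_def by simp
qed

lemma card_Diff_insert_Suc:
  "card ({1..Suc n} - insert (Suc n) J) = card ({1..n} - J)"
proof -
  have "{1..Suc n} - insert (Suc n) J = {1..n} - J" by auto
  then show ?thesis by simp
qed

lemma card_Diff_Suc:
  "J \<subseteq> {1..n} \<Longrightarrow> card ({1..Suc n} - J) = Suc (card ({1..n} - J))"
proof -
  assume "J \<subseteq> {1..n}"
  then have "{1..Suc n} - J = insert (Suc n) ({1..n} - J)" by auto
  then show ?thesis by simp
qed

definition staircase_weight :: "'a::comm_semiring_1 \<Rightarrow> nat \<Rightarrow> nat set \<Rightarrow> 'a" where
  "staircase_weight q n J = (\<Prod>i=1..n. qint q (stB J i + 1))"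

text \<open>Indexing by the number k of missing points, rather than by card J = n - k, keeps the
  sum meaningful (and zero) for k > n, so its recurrence holds without side conditions.\<close>

definition staircase_sum :: "'a::comm_semiring_1 \<Rightarrow> nat \<Rightarrow> nat \<Rightarrow> 'a" where
  "staircase_sum q n k =
     (\<Sum>J | J \<subseteq> {1..n} \<and> card ({1..n} - J) = k. staircase_weight q n J)"

lemma staircase_weight_Suc:
  "J \<subseteq> {1..n} \<Longrightarrow>
     staircase_weight q (Suc n) J = qint q (2 * card ({1..n} - J) + 2) * staircase_weight q n J"
  unfolding staircase_weight_def by (simp add: prod.nat_ivl_Suc' stB_Suc_notin mult.commute)

lemma staircase_weight_Suc_insert:
  assumes "J \<subseteq> {1..n}"
  shows "staircase_weight q (Suc n) (insert (Suc n) J) =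
           qint q (2 * card ({1..n} - J) + 1) * staircase_weight q n J"
proof -
  have "(\<Prod>i=1..n. qint q (stB (insert (Suc n) J) i + 1)) = staircase_weight q n J"
    unfolding staircase_weight_def by (rule prod.cong) (auto simp: stB_insert_greater)
  then show ?thesis
    unfolding staircase_weight_def
    by (simp add: prod.nat_ivl_Suc' stB_Suc_insert[OF assms] mult.commute)
qed

lemma staircase_sum_conv_Pow:
  "staircase_sum q n k =
     (\<Sum>J\<in>Pow {1..n}. if card ({1..n} - J) = k then staircase_weight q n J else 0)"
  unfolding staircase_sum_def by (subst sum.inter_filter [symmetric]) (auto simp: Pow_def)

lemma staircase_sum_0: "staircase_sum q 0 k = (if k = 0 then 1 else 0)"
  by (simp add: staircase_sum_conv_Pow staircase_weight_def)

lemma staircase_sum_Suc: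
  "staircase_sum q (Suc n) k =
     (if k = 0 then 0 else qint q (2 * k) * staircase_sum q n (k - 1))
     + qint q (2 * k + 1) * staircase_sum q n k"
proof -
  have split_Pow: "(\<Sum>J\<in>Pow {1..Suc n}. f J) =
      (\<Sum>J\<in>Pow {1..n}. f J) + (\<Sum>J\<in>Pow {1..n}. f (insert (Suc n) J))" for f :: "nat set \<Rightarrow> 'a"
    using sum_Pow_insert[of "{1..n}" "Suc n" f] by (simp add: atLeastAtMostSuc_conv)
  have notin: "(if Suc (card ({1..n} - J)) = k then staircase_weight q (Suc n) J else 0) =
      (if k = 0 then 0 else
         qint q (2 * k) * (if card ({1..n} - J) = k - 1 then staircase_weight q n J else 0))"
    if "J \<in> Pow {1..n}" for J
    using that by (cases k) (auto simp: staircase_weight_Suc)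
  have ins: "(if card ({1..n} - J) = k then staircase_weight q (Suc n) (insert (Suc n) J) else 0) =
      qint q (2 * k + 1) * (if card ({1..n} - J) = k then staircase_weight q n J else 0)"
    if "J \<in> Pow {1..n}" for J
    using that by (auto simp: staircase_weight_Suc_insert)
  have "staircase_sum q (Suc n) k =
      (\<Sum>J\<in>Pow {1..n}. if Suc (card ({1..n} - J)) = k then staircase_weight q (Suc n) J else 0)
    + (\<Sum>J\<in>Pow {1..n}. if card ({1..n} - J) = k
                          then staircase_weight q (Suc n) (insert (Suc n) J) else 0)"
    unfolding staircase_sum_conv_Pow split_Pow
    by (intro arg_cong2[where f = "(+)"] sum.cong)
      (simp_all only: Pow_iff card_Diff_Suc card_Diff_insert_Suc)
  also have "\<dots> =
      (\<Sum>J\<in>Pow {1..n}. if k = 0 then 0 else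
         qint q (2 * k) * (if card ({1..n} - J) = k - 1 then staircase_weight q n J else 0))
    + (\<Sum>J\<in>Pow {1..n}.
         qint q (2 * k + 1) * (if card ({1..n} - J) = k then staircase_weight q n J else 0))"
    by (intro arg_cong2[where f = "(+)"] sum.cong refl notin ins)
  also have "\<dots> = (if k = 0 then 0 else qint q (2 * k) * staircase_sum q n (k - 1))
                  + qint q (2 * k + 1) * staircase_sum q n k"
    by (simp add: staircase_sum_conv_Pow sum_distrib_left)
  finally show ?thesis .
qed

lemma staircase_sum_eq_stirB: "staircase_sum q n k = qdfact q (2 * k) * stirB q n k"
proof (induction n arbitrary: k)
  case 0
  then show ?case by (simp add: staircase_sum_0)
next
  case (Suc n)
  show ?case
  proof (cases k)
    case 0
    then show ?thesis by (simp add: staircase_sum_Suc Suc.IH qint_def)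
  next
    case (Suc k')
    then have "qdfact q (2 * k) = qint q (2 * k) * qdfact q (2 * k')" by simp
    then show ?thesis by (simp add: staircase_sum_Suc Suc.IH \<open>k = Suc k'\<close> algebra_simps)
  qed
qed

theorem mainTheorem1:
  fixes q :: "'a::comm_ring_1" and n k :: nat
  assumes "n \<ge> 1" and "k \<le> n"
  shows "(\<Sum>J\<in>{J. J \<subseteq> {1..n} \<and> card J = n - k}.
            \<Prod>i=1..n. qint q (stB J i + 1))
         = qdfact q (2 * k) * stirB q n k"
proof -
  have "card ({1..n} - J) = k \<longleftrightarrow> card J = n - k" if "J \<subseteq> {1..n}" for J
    using that assms(2) card_mono[OF _ that] by (auto simp: card_Diff_subset finite_subset)
  then have "{J. J \<subseteq> {1..n} \<and> card J = n - k} = {J. J \<subseteq> {1..n} \<and> card ({1..n} - J) = k}"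
    by blast
  then show ?thesis
    using staircase_sum_eq_stirB[of q n k] by (simp add: staircase_sum_def staircase_weight_def)
qed

end
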